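(* Consider the following two-player complete-information contest. Players $X$ and $Y$ choose efforts $x,y\in[0,\infty)$. Fix real parameters $a\neq 0$, $b>0$, $c>0$ and a common marginal cost $\theta$ with $0<\theta<c$. Player $X$'s payoff is $P(x,y)-\theta x$ and player $Y$'s payoff is $1-P(x,y)-\theta y$, where $P(x,y)=\tfrac12+(x-y)\bigl(c-b(x+y)+axy\bigr)$ (no truncation; this is the "unrestricted" contest). Let $\kappa=b/a$ and $\zeta=\kappa^2-\frac{c-\theta}{a}=\frac{b^2-a(c-\theta)}{a^2}$. (1) If $\zeta\ge 0$, the unrestricted contest has a unique Nash equilibrium (in pure or mixed strategies), and it is the symmetric pure profile $x^*=y^*=\kappa-\operatorname{sgn}(a)\sqrt{\zeta}$. (2) If $\zeta<0$, no pure-strategy equilibrium exists. Every mixed equilibrium $(\mu_X,\mu_Y)$ satisfies $E[x]=E[y]=\kappa$ and $\operatorname{Var}(x)=\operatorname{Var}(y)=-\zeta$; conversely, every pair of probability distributions on $[0,\infty)$ with mean $\kappa$ and variance $-\zeta$ is a mixed Nash equilibrium of the unrestricted contest. The two regions meet at $\zeta=0$, i.e. when $b^2=a(c-\theta)$.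
   Context: Mixed strategies are probability distributions on $[0,\infty)$ with finite second moments, so that expected payoffs are well defined. A "mixed equilibrium" in part (2) means an equilibrium in which at least one player uses a nondegenerate distribution. *)

theory Defs
  imports "HOL-Probability.Probability"
begin

definition winP :: "real \<Rightarrow> real \<Rightarrow> real \<Rightarrow> real \<Rightarrow> real \<Rightarrow> real" where
  "winP a b c x y = 1/2 + (x - y) * (c - b * (x + y) + a * x * y)"

definition strategy :: "real measure \<Rightarrow> bool" where
  "strategy M \<longleftrightarrow> prob_space M \<and> sets M = sets borel \<and> (AE x in M. 0 \<le> x)
     \<and> integrable M (\<lambda>x. x ^ 2)"

definition payoffX :: "real \<Rightarrow> real \<Rightarrow> real \<Rightarrow> real \<Rightarrow> real measure \<Rightarrow> real measure \<Rightarrow> real" where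
  "payoffX a b c \<theta> M N =
     (\<integral>z. winP a b c (fst z) (snd z) \<partial>(M \<Otimes>\<^sub>M N)) - \<theta> * (\<integral>x. x \<partial>M)"

definition payoffY :: "real \<Rightarrow> real \<Rightarrow> real \<Rightarrow> real \<Rightarrow> real measure \<Rightarrow> real measure \<Rightarrow> real" where
  "payoffY a b c \<theta> M N =
     (\<integral>z. 1 - winP a b c (fst z) (snd z) \<partial>(M \<Otimes>\<^sub>M N)) - \<theta> * (\<integral>y. y \<partial>N)"

definition nash :: "real \<Rightarrow> real \<Rightarrow> real \<Rightarrow> real \<Rightarrow> real measure \<Rightarrow> real measure \<Rightarrow> bool" where
  "nash a b c \<theta> M N \<longleftrightarrow> strategy M \<and> strategy N \<and>
     (\<forall>M'. strategy M' \<longrightarrow> payoffX a b c \<theta> M' N \<le> payoffX a b c \<theta> M N) \<and>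
     (\<forall>N'. strategy N' \<longrightarrow> payoffY a b c \<theta> M N' \<le> payoffY a b c \<theta> M N)"

definition mean :: "real measure \<Rightarrow> real" where
  "mean M = (\<integral>x. x \<partial>M)"

definition var :: "real measure \<Rightarrow> real" where
  "var M = (\<integral>x. (x - mean M) ^ 2 \<partial>M)"

end

theory Submission
  imports Defs
begin

(*
  Against an opponent whose effort has mean n and variance w, the expected payoff of a strategy M
  is a constant plus the M-expectation of g(x) = (a n - b) x\<^sup>2 + (c - \<theta> - a (w + n\<^sup>2)) x.
  So M is a best reply iff no pure effort x \<ge> 0 does better, i.e. iff M lives on the maximisers
  of g over [0, \<infinity>). Boundedness of g forces a n \<le> b; if a n < b, then g is strictly concave and
  M is the point mass at its maximiser, while if a n = b, then g is linear and, as equilibrium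
  means are positive, must vanish. Combining the first-order conditions of both players leaves
  two possibilities: both play the point mass at the root x of a x\<^sup>2 - 2 b x + (c - \<theta>) = 0
  with a x \<le> b (possible only for \<zeta> \<ge> 0), or both means are \<kappa> and both variances are -\<zeta>
  (possible only for \<zeta> \<le> 0).
*)

section \<open>Maximising a quadratic on the nonnegative reals\<close>

lemma quadratic_bounded_above_on_nonneg:
  fixes A B V :: real
  assumes bounded: "\<forall>x\<ge>0. A * x^2 + B * x \<le> V"
  shows "A \<le> 0"
proof (rule ccontr)
  assume "\<not> A \<le> 0"
  define K where "K = \<bar>B\<bar> + \<bar>V\<bar> + 1"
  define s where "s = max 1 (K / A)"
  have "1 \<le> s" "K / A \<le> s"
    by (simp_all add: s_def)
  then have "K \<le> A * s"
    using \<open>\<not> A \<le> 0\<close> by (simp add: pos_divide_le_eq mult.commute)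
  then have "K * s \<le> A * s^2"
    using \<open>1 \<le> s\<close> mult_right_mono[of K "A * s" s] by (simp add: power2_eq_square mult.assoc)
  moreover have "\<bar>V\<bar> + 1 \<le> (\<bar>V\<bar> + 1) * s"
    using \<open>1 \<le> s\<close> mult_left_mono[of 1 s "\<bar>V\<bar> + 1"] by simp
  moreover have "- (\<bar>B\<bar> * s) \<le> B * s"
    using \<open>1 \<le> s\<close> mult_right_mono[of "- \<bar>B\<bar>" B s] by simp
  moreover have "K * s = \<bar>B\<bar> * s + (\<bar>V\<bar> + 1) * s"
    by (simp add: K_def distrib_right)
  ultimately have "V < A * s^2 + B * s"
    by linarith
  then show False
    using bounded[rule_format, of s] \<open>1 \<le> s\<close> by linarith
qed

lemma quadratic_max_on_nonneg:
  fixes A B x :: real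
  assumes "0 \<le> x" and max: "\<forall>y\<ge>0. A * y^2 + B * y \<le> A * x^2 + B * x"
  shows "2 * A * x + B \<le> 0" and "x * (2 * A * x + B) = 0"
proof -
  define g where "g = 2 * A * x + B"
  have "A \<le> 0"
    using max by (rule quadratic_bounded_above_on_nonneg)
  have no_ascent: False if "g \<noteq> 0" "0 < l" "0 < 1 + A * l" "0 \<le> x + l * g" for l
  proof -
    have "A * (x + l * g)^2 + B * (x + l * g) - (A * x^2 + B * x) = l * g^2 * (1 + A * l)"
      by (simp add: g_def power2_eq_square algebra_simps)
    moreover have "0 < l * g^2 * (1 + A * l)"
      using that by simp
    ultimately show False
      using max \<open>0 \<le> x + l * g\<close> by force
  qed
  have step: "0 < 1 + A * l" if "0 < l" "l \<le> 1 / (1 - A)" for l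
  proof -
    have "A / (1 - A) \<le> A * l"
      using \<open>A \<le> 0\<close> that mult_left_mono_neg[OF that(2) \<open>A \<le> 0\<close>] by simp
    moreover have "0 < 1 + A / (1 - A)"
      using \<open>A \<le> 0\<close> by (simp add: field_simps)
    ultimately show ?thesis by linarith
  qed
  show g: "g \<le> 0" unfolding g_def[symmetric]
  proof (rule ccontr)
    assume "\<not> g \<le> 0"
    then show False
      using no_ascent[of "1 / (1 - A)"] step[of "1 / (1 - A)"] \<open>A \<le> 0\<close> \<open>0 \<le> x\<close>
      by simp
  qed
  show "x * g = 0" unfolding g_def[symmetric]
  proof (rule ccontr)
    assume "\<not> x * g = 0"
    then have "0 < x" "g < 0" using g \<open>0 \<le> x\<close> by auto
    define l where "l = min (1 / (1 - A)) (x / - g)"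
    have "0 < l" "l \<le> 1 / (1 - A)" "l \<le> x / - g"
      using \<open>0 < x\<close> \<open>g < 0\<close> \<open>A \<le> 0\<close> by (auto simp: l_def divide_pos_neg)
    moreover have "0 \<le> x + l * g"
      using \<open>l \<le> x / - g\<close> \<open>g < 0\<close> by (simp add: field_simps)
    ultimately show False
      using no_ascent step \<open>g < 0\<close> by auto
  qed
qed

section \<open>Best replies in terms of first and second moments\<close>

definition effort_gain :: "real \<Rightarrow> real \<Rightarrow> real \<Rightarrow> real \<Rightarrow> real \<Rightarrow> real \<Rightarrow> real" where
  "effort_gain a b t n w x = (a * n - b) * x^2 + (t - a * (w + n^2)) * x"

text \<open>The right-hand side is the expectation of \<open>effort_gain a b t n w\<close> under any
  distribution with mean \<open>m\<close> and variance \<open>v\<close>.\<close>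

definition best_reply_moments :: "real \<Rightarrow> real \<Rightarrow> real \<Rightarrow> real \<Rightarrow> real \<Rightarrow> real \<Rightarrow> real \<Rightarrow> bool" where
  "best_reply_moments a b t m v n w \<longleftrightarrow>
     (\<forall>x\<ge>0. effort_gain a b t n w x \<le> effort_gain a b t n w m + (a * n - b) * v)"

lemma best_reply_moments_conditions:
  fixes a b t m v n w :: real
  assumes "0 \<le> m" "0 \<le> v" and best: "best_reply_moments a b t m v n w"
  shows "a * n \<le> b" and "(a * n - b) * v = 0"
    and "2 * (a * n - b) * m + (t - a * (w + n^2)) \<le> 0"
    and "m * (2 * (a * n - b) * m + (t - a * (w + n^2))) = 0"
proof -
  define A where "A = a * n - b"
  define B where "B = t - a * (w + n^2)"
  have bound: "\<forall>x\<ge>0. A * x^2 + B * x \<le> A * m^2 + B * m + A * v"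
    using best by (simp add: best_reply_moments_def effort_gain_def A_def B_def)
  then have "A \<le> 0"
    by (rule quadratic_bounded_above_on_nonneg)
  have "0 \<le> A * v"
    using bound[rule_format, OF \<open>0 \<le> m\<close>] by linarith
  moreover have "A * v \<le> 0"
    using \<open>A \<le> 0\<close> \<open>0 \<le> v\<close> by (rule mult_nonpos_nonneg)
  ultimately have "A * v = 0"
    by linarith
  with bound have "\<forall>x\<ge>0. A * x^2 + B * x \<le> A * m^2 + B * m"
    by simp
  from quadratic_max_on_nonneg[OF \<open>0 \<le> m\<close> this] \<open>A \<le> 0\<close> \<open>A * v = 0\<close>
  show "a * n \<le> b" "(a * n - b) * v = 0"
    "2 * (a * n - b) * m + (t - a * (w + n^2)) \<le> 0"
    "m * (2 * (a * n - b) * m + (t - a * (w + n^2))) = 0"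
    by (simp_all add: A_def B_def)
qed

lemma mutual_best_reply_mean_pos:
  fixes a b t m v n w :: real
  assumes "0 < b" "0 < t" "0 \<le> m" "0 \<le> v" "0 \<le> n" "0 \<le> w"
    and X: "best_reply_moments a b t m v n w" and Y: "best_reply_moments a b t n w m v"
  shows "0 < m"
proof (rule ccontr)
  assume "\<not> 0 < m"
  then have "m = 0" using \<open>0 \<le> m\<close> by simp
  note X = best_reply_moments_conditions[OF \<open>0 \<le> m\<close> \<open>0 \<le> v\<close> X]
  note Y = best_reply_moments_conditions[OF \<open>0 \<le> n\<close> \<open>0 \<le> w\<close> Y]
  have "w = 0"
    using Y(2) \<open>m = 0\<close> \<open>0 < b\<close> by simp
  then have "t \<le> a * n^2"
    using X(3) \<open>m = 0\<close> by simp
  then have "0 < a * n^2"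
    using \<open>0 < t\<close> by linarith
  then have "0 < a" "0 < n"
    using \<open>0 \<le> n\<close> by (auto simp: zero_less_mult_iff)
  then have "2 * (a * m - b) * n + (t - a * (v + m^2)) = 0"
    using Y(4) by simp
  then have "2 * b * n = t - a * v"
    using \<open>m = 0\<close> by simp
  moreover have "t - a * v \<le> t"
    using \<open>0 < a\<close> \<open>0 \<le> v\<close> by simp
  moreover have "a * n * n \<le> b * n"
    using X(1) \<open>0 < n\<close> by (simp add: mult_right_mono)
  ultimately have "b * n \<le> 0"
    using \<open>t \<le> a * n^2\<close> by (simp add: power2_eq_square)
  then show False
    using \<open>0 < b\<close> \<open>0 < n\<close> by (simp add: mult_le_0_iff)
qed

lemma mutual_best_reply_first_order:
  fixes a b t m v n w :: real
  assumes "0 < b" "0 < t" "0 \<le> m" "0 \<le> v" "0 \<le> n" "0 \<le> w"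
    and X: "best_reply_moments a b t m v n w" and Y: "best_reply_moments a b t n w m v"
  defines "p \<equiv> a * m - b" and "q \<equiv> a * n - b"
  shows "p \<le> 0" "q \<le> 0" "q * v = 0" "p * w = 0"
    and "2 * p * q - q^2 - a^2 * w = b^2 - a * t"
    and "2 * p * q - p^2 - a^2 * v = b^2 - a * t"
proof -
  have "0 < m" "0 < n"
    using mutual_best_reply_mean_pos assms(1-6) X Y by blast+
  note X = best_reply_moments_conditions[OF \<open>0 \<le> m\<close> \<open>0 \<le> v\<close> X]
  note Y = best_reply_moments_conditions[OF \<open>0 \<le> n\<close> \<open>0 \<le> w\<close> Y]
  show "p \<le> 0" "q \<le> 0" "q * v = 0" "p * w = 0"
    using X(1,2) Y(1,2) by (simp_all add: p_def q_def)
  have "2 * q * m + (t - a * (w + n^2)) = 0"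
    using X(4) \<open>0 < m\<close> by (simp add: q_def)
  then have "a * (2 * q * m + (t - a * (w + n^2))) = 0"
    by simp
  then show "2 * p * q - q^2 - a^2 * w = b^2 - a * t"
    by (simp add: p_def q_def power2_eq_square algebra_simps)
  have "2 * p * n + (t - a * (v + m^2)) = 0"
    using Y(4) \<open>0 < n\<close> by (simp add: p_def)
  then have "a * (2 * p * n + (t - a * (v + m^2))) = 0"
    by simp
  then show "2 * p * q - p^2 - a^2 * v = b^2 - a * t"
    by (simp add: p_def q_def power2_eq_square algebra_simps)
qed

lemma first_order_system_solutions:
  fixes p q v w a D :: real
  assumes "p \<le> 0" "q \<le> 0" "q * v = 0" "p * w = 0" "0 \<le> v" "0 \<le> w"
    and EX: "2 * p * q - q^2 - a^2 * w = D" and EY: "2 * p * q - p^2 - a^2 * v = D"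
  shows "p = q \<and> (v = 0 \<and> w = 0 \<and> p^2 = D \<or> p = 0 \<and> a^2 * v = - D \<and> a^2 * w = - D)"
proof -
  have "0 \<le> a^2 * v" "0 \<le> a^2 * w"
    using \<open>0 \<le> v\<close> \<open>0 \<le> w\<close> by simp_all
  have "q = 0" if "p = 0"
  proof (rule ccontr)
    assume "q \<noteq> 0"
    then have "v = 0" using \<open>q * v = 0\<close> by simp
    then have "q^2 + a^2 * w = 0" using EX EY \<open>p = 0\<close> by simp
    then show False using \<open>q \<noteq> 0\<close> \<open>0 \<le> a^2 * w\<close> by (simp add: add_nonneg_eq_0_iff)
  qed
  moreover have "p = 0" if "q = 0"
  proof (rule ccontr)
    assume "p \<noteq> 0"
    then have "w = 0" using \<open>p * w = 0\<close> by simp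
    then have "p^2 + a^2 * v = 0" using EX EY \<open>q = 0\<close> by simp
    then show False using \<open>p \<noteq> 0\<close> \<open>0 \<le> a^2 * v\<close> by (simp add: add_nonneg_eq_0_iff)
  qed
  ultimately consider "p = 0" "q = 0" | "p < 0" "q < 0"
    using \<open>p \<le> 0\<close> \<open>q \<le> 0\<close> by fastforce
  then show ?thesis
  proof cases
    case 1
    then show ?thesis
      using EX EY by simp
  next
    case 2
    then have "v = 0" "w = 0"
      using \<open>q * v = 0\<close> \<open>p * w = 0\<close> by simp_all
    then have "(p - q) * (p + q) = 0"
      using EX EY by (simp add: power2_eq_square algebra_simps)
    then have "p = q"
      using 2 by simp
    then show ?thesis
      using \<open>v = 0\<close> \<open>w = 0\<close> EY by (simp add: power2_eq_square)
  qed
qed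

lemma mutual_best_reply_moments_cases:
  fixes a b t m v n w :: real
  assumes "a \<noteq> 0" "0 < b" "0 < t" "0 \<le> m" "0 \<le> v" "0 \<le> n" "0 \<le> w"
    and "best_reply_moments a b t m v n w" "best_reply_moments a b t n w m v"
  shows "m = n \<and> (v = 0 \<and> w = 0 \<and> (a * m - b)^2 = b^2 - a * t \<and> a * m \<le> b
                   \<or> a * m = b \<and> a^2 * v = a * t - b^2 \<and> a^2 * w = a * t - b^2)"
proof -
  note first_order = mutual_best_reply_first_order[OF assms(2-9)]
  from first_order_system_solutions[OF first_order(1-4) \<open>0 \<le> v\<close> \<open>0 \<le> w\<close> first_order(5,6)]
  have "a * m = a * n"
    and "v = 0 \<and> w = 0 \<and> (a * m - b)^2 = b^2 - a * t
      \<or> a * m = b \<and> a^2 * v = a * t - b^2 \<and> a^2 * w = a * t - b^2"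
    by auto
  then show ?thesis
    using first_order(1) \<open>a \<noteq> 0\<close> by auto
qed

lemma best_reply_moments_pure:
  fixes a b t x :: real
  assumes "a \<noteq> 0" "(a * x - b)^2 = b^2 - a * t" "a * x \<le> b"
  shows "best_reply_moments a b t x 0 x 0"
  unfolding best_reply_moments_def
proof (intro allI impI)
  fix y :: real
  have "a * (t - a * x^2) = a * (- 2 * (a * x - b) * x)"
    using assms(2) by (simp add: power2_eq_square algebra_simps)
  then have slope: "t - a * x^2 = - 2 * (a * x - b) * x"
    using \<open>a \<noteq> 0\<close> by simp
  have "effort_gain a b t x 0 x - effort_gain a b t x 0 y = - (a * x - b) * (y - x)^2"
    unfolding effort_gain_def add_0_left slope by (simp add: power2_eq_square algebra_simps)
  moreover have "0 \<le> - (a * x - b) * (y - x)^2"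
    using \<open>a * x \<le> b\<close> by simp
  ultimately show "effort_gain a b t x 0 y \<le> effort_gain a b t x 0 x + (a * x - b) * 0"
    by simp
qed

lemma best_reply_moments_indifferent:
  fixes a b t v :: real
  assumes "a \<noteq> 0" "a^2 * v = a * t - b^2"
  shows "best_reply_moments a b t (b / a) v (b / a) v"
proof -
  have "a * (t - a * (v + (b / a)^2)) = 0"
    using assms by (simp add: power2_eq_square field_simps)
  then show ?thesis
    using \<open>a \<noteq> 0\<close> by (simp add: best_reply_moments_def effort_gain_def)
qed

lemma sgn_sqrt_root_iff:
  fixes a d z :: real
  assumes "a \<noteq> 0"
  shows "(a * d)^2 = a^2 * z \<and> a * d \<le> 0 \<longleftrightarrow> 0 \<le> z \<and> d = - (sgn a * sqrt z)"
proof -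
  have "(a * d)^2 = a^2 * z \<longleftrightarrow> z = d^2"
    using assms by (auto simp: power_mult_distrib)
  moreover have "a * d \<le> 0 \<longleftrightarrow> d = - (sgn a * \<bar>d\<bar>)"
    using assms by (cases "0 < a") (auto simp: mult_le_0_iff abs_if sgn_if)
  ultimately show ?thesis
    using assms by (auto simp: sgn_if)
qed

lemma lower_root_iff:
  fixes a b t x :: real
  assumes "a \<noteq> 0"
  defines "\<kappa> \<equiv> b / a" and "\<zeta> \<equiv> (b / a)^2 - t / a"
  shows "(a * x - b)^2 = b^2 - a * t \<and> a * x \<le> b \<longleftrightarrow> 0 \<le> \<zeta> \<and> x = \<kappa> - sgn a * sqrt \<zeta>"
proof -
  have "a * x - b = a * (x - \<kappa>)" and "b^2 - a * t = a^2 * \<zeta>"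
    using assms by (simp_all add: \<kappa>_def \<zeta>_def power2_eq_square field_simps)
  then show ?thesis
    using sgn_sqrt_root_iff[OF \<open>a \<noteq> 0\<close>, of "x - \<kappa>" \<zeta>] by auto
qed

lemma mutual_best_reply_moments_iff:
  fixes a b t m v n w :: real
  assumes "a \<noteq> 0" "0 < b" "0 < t" "0 \<le> m" "0 \<le> v" "0 \<le> n" "0 \<le> w"
  defines "\<kappa> \<equiv> b / a" and "\<zeta> \<equiv> (b / a)^2 - t / a"
  shows "best_reply_moments a b t m v n w \<and> best_reply_moments a b t n w m v \<longleftrightarrow>
    m = n \<and> v = w \<and> (v = 0 \<and> 0 \<le> \<zeta> \<and> m = \<kappa> - sgn a * sqrt \<zeta> \<or> m = \<kappa> \<and> v = - \<zeta>)"
proof -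
  have root: "(a * x - b)^2 = b^2 - a * t \<and> a * x \<le> b \<longleftrightarrow> 0 \<le> \<zeta> \<and> x = \<kappa> - sgn a * sqrt \<zeta>"
    for x
    unfolding \<kappa>_def \<zeta>_def using \<open>a \<noteq> 0\<close> by (rule lower_root_iff)
  have indifferent: "a^2 * v = a * t - b^2 \<longleftrightarrow> v = - \<zeta>" for v
    using \<open>a \<noteq> 0\<close> by (auto simp: \<zeta>_def power2_eq_square field_simps)
  have mean_kappa: "a * m = b \<longleftrightarrow> m = \<kappa>"
    using \<open>a \<noteq> 0\<close> by (auto simp: \<kappa>_def field_simps)
  show ?thesis
  proof
    assume "best_reply_moments a b t m v n w \<and> best_reply_moments a b t n w m v"
    then show "m = n \<and> v = w \<and> (v = 0 \<and> 0 \<le> \<zeta> \<and> m = \<kappa> - sgn a * sqrt \<zeta> \<or> m = \<kappa> \<and> v = - \<zeta>)"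
      using mutual_best_reply_moments_cases[OF assms(1-7)] root[of m] indifferent[of v]
        indifferent[of w] mean_kappa
      by auto
  next
    assume H: "m = n \<and> v = w \<and> (v = 0 \<and> 0 \<le> \<zeta> \<and> m = \<kappa> - sgn a * sqrt \<zeta> \<or> m = \<kappa> \<and> v = - \<zeta>)"
    then consider "v = 0" "0 \<le> \<zeta>" "m = \<kappa> - sgn a * sqrt \<zeta>" | "m = \<kappa>" "v = - \<zeta>"
      by blast
    then have "best_reply_moments a b t m v m v"
    proof cases
      case 1
      then show ?thesis
        using best_reply_moments_pure[OF \<open>a \<noteq> 0\<close>] root[of m] by simp
    next
      case 2
      then show ?thesis
        using best_reply_moments_indifferent[OF \<open>a \<noteq> 0\<close>] indifferent[of v] by (simp add: \<kappa>_def)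
    qed
    then show "best_reply_moments a b t m v n w \<and> best_reply_moments a b t n w m v"
      using H by simp
  qed
qed

lemma lower_root_nonneg:
  fixes a b t :: real
  assumes "a \<noteq> 0" "0 < b" "0 < t"
  defines "\<kappa> \<equiv> b / a" and "\<zeta> \<equiv> (b / a)^2 - t / a"
  shows "0 \<le> \<kappa> - sgn a * sqrt \<zeta>"
proof (cases "0 < a")
  case True
  then have "\<zeta> \<le> \<kappa>^2" "0 < \<kappa>"
    using \<open>0 < t\<close> \<open>0 < b\<close> by (simp_all add: \<zeta>_def \<kappa>_def)
  then have "sqrt \<zeta> \<le> \<kappa>"
    using real_sqrt_le_mono[of \<zeta> "\<kappa>^2"] by simp
  then show ?thesis
    using True by simp
next
  case False
  then have "a < 0"
    using \<open>a \<noteq> 0\<close> by simp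
  then have "\<kappa>^2 \<le> \<zeta>"
    using \<open>0 < t\<close> by (simp add: \<zeta>_def \<kappa>_def divide_pos_neg less_imp_le)
  then have "\<bar>\<kappa>\<bar> \<le> sqrt \<zeta>"
    using real_sqrt_le_mono[of "\<kappa>^2" \<zeta>] by simp
  then show ?thesis
    using \<open>a < 0\<close> by simp
qed

lemma strategy_sets: "strategy M \<Longrightarrow> sets M = sets borel"
  by (simp add: strategy_def)

lemma strategy_prob_space: "strategy M \<Longrightarrow> prob_space M"
  by (simp add: strategy_def)

lemma strategy_borel_measurable:
  "strategy M \<Longrightarrow> f \<in> borel_measurable borel \<Longrightarrow> f \<in> borel_measurable M"
  using measurable_cong_sets[OF strategy_sets refl] by blast

lemma strategy_integrable:
  assumes "strategy M"
  shows "integrable M (\<lambda>x. x)" and "integrable M (\<lambda>x. x^2)"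
proof -
  interpret prob_space M
    using assms by (rule strategy_prob_space)
  show square: "integrable M (\<lambda>x. x^2)"
    using assms by (simp add: strategy_def)
  have "(\<lambda>x. x) \<in> borel_measurable M"
    using assms by (rule strategy_borel_measurable) simp
  then show "integrable M (\<lambda>x. x)"
    using square by (rule square_integrable_imp_integrable)
qed

lemma mean_nonneg: "strategy M \<Longrightarrow> 0 \<le> mean M"
  unfolding mean_def strategy_def by (auto intro: integral_nonneg_AE)

lemma var_nonneg: "strategy M \<Longrightarrow> 0 \<le> var M"
  unfolding var_def by simp

lemma integral_square_eq_var:
  assumes "strategy M"
  shows "(\<integral>x. x^2 \<partial>M) = var M + (mean M)^2"
proof -
  interpret prob_space M
    using assms by (rule strategy_prob_space)
  show ?thesis
    using variance_eq[of "\<lambda>x. x"] strategy_integrable[OF assms]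
    by (simp add: var_def mean_def)
qed

lemma strategy_return: "0 \<le> x \<Longrightarrow> strategy (return borel x)"
  by (auto simp: strategy_def prob_space_return AE_return integrable_iff_bounded nn_integral_return)

lemma mean_return: "mean (return borel x) = x"
  by (simp add: mean_def integral_return)

lemma var_return: "var (return borel x) = 0"
  by (simp add: var_def mean_return integral_return)

lemma strategy_var_eq_0_iff_return:
  "strategy M \<and> var M = 0 \<and> mean M = x \<longleftrightarrow> 0 \<le> x \<and> M = return borel x"
proof
  assume "strategy M \<and> var M = 0 \<and> mean M = x"
  then have M: "strategy M" and "var M = 0" "mean M = x"
    by simp_all
  interpret prob_space M
    using M by (rule strategy_prob_space)
  note integrable = strategy_integrable[OF M]
  have "integrable M (\<lambda>y. (y - x)^2)"
    using integrable by (simp add: power2_diff)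
  moreover have "(\<integral>y. (y - x)^2 \<partial>M) = 0"
    using \<open>var M = 0\<close> \<open>mean M = x\<close> by (simp add: var_def)
  ultimately have "AE y in M. (y - x)^2 = 0"
    by (simp add: integral_nonneg_eq_0_iff_AE)
  then have "M = return M x"
    by (intro AE_eq_constD) simp
  also have "return M x = return borel x"
    using M by (intro return_cong) (simp add: strategy_sets)
  finally show "0 \<le> x \<and> M = return borel x"
    using mean_nonneg[OF M] \<open>mean M = x\<close> by simp
next
  assume "0 \<le> x \<and> M = return borel x"
  then show "strategy M \<and> var M = 0 \<and> mean M = x"
    by (simp add: strategy_return mean_return var_return)
qed

section \<open>Payoffs\<close>

lemma (in pair_sigma_finite) integrable_mult_fst_snd:
  fixes f g :: "_ \<Rightarrow> real"
  assumes f: "integrable M1 f" and g: "integrable M2 g"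
  shows "integrable (M1 \<Otimes>\<^sub>M M2) (\<lambda>z. f (fst z) * g (snd z))"
proof (rule Fubini_integrable)
  have [measurable]: "f \<in> borel_measurable M1" "g \<in> borel_measurable M2"
    using f g by auto
  show "(\<lambda>z. f (fst z) * g (snd z)) \<in> borel_measurable (M1 \<Otimes>\<^sub>M M2)"
    by measurable
  show "integrable M1 (\<lambda>x. \<integral>y. norm (f (fst (x, y)) * g (snd (x, y))) \<partial>M2)"
    using f by (simp add: abs_mult)
  show "AE x in M1. integrable M2 (\<lambda>y. f (fst (x, y)) * g (snd (x, y)))"
    using g by simp
qed

lemma (in pair_sigma_finite) integral_mult_fst_snd:
  fixes f g :: "_ \<Rightarrow> real"
  assumes "integrable M1 f" and "integrable M2 g"
  shows "(\<integral>z. f (fst z) * g (snd z) \<partial>(M1 \<Otimes>\<^sub>M M2)) = integral\<^sup>L M1 f * integral\<^sup>L M2 g"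
  using integral_fst'[OF integrable_mult_fst_snd[OF assms]] by simp

lemma strategy_pair_sigma_finite:
  assumes "strategy M" "strategy N"
  shows "pair_sigma_finite M N"
proof -
  interpret M: prob_space M using assms(1) by (rule strategy_prob_space)
  interpret N: prob_space N using assms(2) by (rule strategy_prob_space)
  show ?thesis ..
qed

lemma integrable_effort_gain: "strategy M \<Longrightarrow> integrable M (effort_gain a b t n w)"
  using strategy_integrable[of M] by (simp add: effort_gain_def[abs_def])

lemma integral_effort_gain:
  assumes "strategy M"
  shows "(\<integral>x. effort_gain a b t n w x \<partial>M) = effort_gain a b t n w (mean M) + (a * n - b) * var M"
proof -
  have "(\<integral>x. effort_gain a b t n w x \<partial>M) = (a * n - b) * (\<integral>x. x^2 \<partial>M) + (t - a * (w + n^2)) * mean M"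
    using strategy_integrable[OF assms] by (simp add: effort_gain_def mean_def)
  then show ?thesis
    unfolding integral_square_eq_var[OF assms] by (simp add: effort_gain_def algebra_simps)
qed

lemma payoffX_eq:
  assumes M: "strategy M" and N: "strategy N"
  shows "payoffX a b c \<theta> M N = 1/2 - c * mean N + b * (var N + (mean N)^2)
    + (\<integral>x. effort_gain a b (c - \<theta>) (mean N) (var N) x \<partial>M)"
proof -
  interpret M: prob_space M using M by (rule strategy_prob_space)
  interpret N: prob_space N using N by (rule strategy_prob_space)
  interpret pair_prob_space M N ..
  txt \<open>Every monomial is written as a product \<open>f x * g y\<close> so that
    \<open>integral_mult_fst_snd\<close> applies to it.\<close>
  have expand: "(\<lambda>z. winP a b c (fst z) (snd z)) = (\<lambda>z. 1/2
      + c * (fst z * 1) - c * (1 * snd z) - b * ((fst z)^2 * 1) + b * (1 * (snd z)^2)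
      + a * ((fst z)^2 * snd z) - a * (fst z * (snd z)^2))"
    by (simp add: winP_def power2_eq_square algebra_simps)
  have product: "integrable (M \<Otimes>\<^sub>M N) (\<lambda>z. f (fst z) * g (snd z))
      \<and> (\<integral>z. f (fst z) * g (snd z) \<partial>(M \<Otimes>\<^sub>M N)) = integral\<^sup>L M f * integral\<^sup>L N g"
    if "integrable M f" "integrable N g" for f g :: "real \<Rightarrow> real"
    using that by (simp add: integrable_mult_fst_snd integral_mult_fst_snd)
  note M1 = strategy_integrable[OF M] M.integrable_const[of 1]
  note N1 = strategy_integrable[OF N] N.integrable_const[of 1]
  have "(\<integral>z. winP a b c (fst z) (snd z) \<partial>(M \<Otimes>\<^sub>M N)) = 1/2 + c * mean M - c * mean N
      - b * (\<integral>x. x^2 \<partial>M) + b * (\<integral>y. y^2 \<partial>N)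
      + a * (\<integral>x. x^2 \<partial>M) * mean N - a * mean M * (\<integral>y. y^2 \<partial>N)"
    unfolding expand
    using product[OF M1(1) N1(3)] product[OF M1(3) N1(1)] product[OF M1(2) N1(3)]
      product[OF M1(3) N1(2)] product[OF M1(2) N1(1)] product[OF M1(1) N1(2)]
    by (simp add: M.prob_space N.prob_space P.prob_space mean_def)
  then show ?thesis
    unfolding payoffX_def integral_effort_gain[OF M] integral_square_eq_var[OF M] integral_square_eq_var[OF N]
    by (simp add: effort_gain_def mean_def algebra_simps)
qed

lemma payoffY_eq_payoffX_swap:
  assumes M: "strategy M" and N: "strategy N"
  shows "payoffY a b c \<theta> M N = payoffX a b c \<theta> N M"
proof -
  interpret pair_sigma_finite N M
    using N M by (rule strategy_pair_sigma_finite)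
  have [measurable_cong]: "sets M = sets borel" "sets N = sets borel"
    using M N by (simp_all add: strategy_sets)
  have "(\<lambda>z. winP a b c (fst z) (snd z)) \<in> borel_measurable (N \<Otimes>\<^sub>M M)"
    unfolding winP_def by measurable
  from integral_product_swap[OF this]
  have "(\<integral>z. winP a b c (snd z) (fst z) \<partial>(M \<Otimes>\<^sub>M N)) = (\<integral>z. winP a b c (fst z) (snd z) \<partial>(N \<Otimes>\<^sub>M M))"
    by (simp add: case_prod_unfold)
  moreover have "1 - winP a b c x y = winP a b c y x" for x y
    by (simp add: winP_def algebra_simps)
  ultimately show ?thesis
    by (simp add: payoffX_def payoffY_def case_prod_beta)
qed

lemma best_reply_iff_moments:
  assumes M: "strategy M" and N: "strategy N"
  shows "(\<forall>M'. strategy M' \<longrightarrow> payoffX a b c \<theta> M' N \<le> payoffX a b c \<theta> M N)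
    \<longleftrightarrow> best_reply_moments a b (c - \<theta>) (mean M) (var M) (mean N) (var N)"
proof -
  define g where "g = effort_gain a b (c - \<theta>) (mean N) (var N)"
  define V where "V = g (mean M) + (a * mean N - b) * var M"
  have "payoffX a b c \<theta> M' N \<le> payoffX a b c \<theta> M N \<longleftrightarrow> (\<integral>x. g x \<partial>M') \<le> V"
    if "strategy M'" for M'
    using that M N by (simp add: payoffX_eq integral_effort_gain g_def V_def)
  then have "(\<forall>M'. strategy M' \<longrightarrow> payoffX a b c \<theta> M' N \<le> payoffX a b c \<theta> M N)
      \<longleftrightarrow> (\<forall>M'. strategy M' \<longrightarrow> (\<integral>x. g x \<partial>M') \<le> V)"
    by blast
  also have "\<dots> \<longleftrightarrow> (\<forall>x\<ge>0. g x \<le> V)"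
  proof safe
    fix x :: real
    assume "\<forall>M'. strategy M' \<longrightarrow> (\<integral>x. g x \<partial>M') \<le> V" "0 \<le> x"
    then show "g x \<le> V"
      using strategy_return[of x] by (force simp: integral_return g_def effort_gain_def[abs_def])
  next
    fix M' :: "real measure"
    assume bound: "\<forall>x\<ge>0. g x \<le> V" and M': "strategy M'"
    interpret M': prob_space M' using M' by (rule strategy_prob_space)
    have "AE x in M'. 0 \<le> x"
      using M' by (simp add: strategy_def)
    then have "AE x in M'. g x \<le> V"
      by eventually_elim (simp add: bound)
    then have "(\<integral>x. g x \<partial>M') \<le> (\<integral>x. V \<partial>M')"
      using integrable_effort_gain[OF M'] by (intro integral_mono_AE) (simp_all add: g_def)
    then show "(\<integral>x. g x \<partial>M') \<le> V"
      by (simp add: M'.prob_space)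
  qed
  finally show ?thesis
    by (simp add: best_reply_moments_def g_def V_def)
qed

lemma nash_iff_best_reply_moments:
  "nash a b c \<theta> M N \<longleftrightarrow> strategy M \<and> strategy N
     \<and> best_reply_moments a b (c - \<theta>) (mean M) (var M) (mean N) (var N)
     \<and> best_reply_moments a b (c - \<theta>) (mean N) (var N) (mean M) (var M)"
  by (auto simp: nash_def payoffY_eq_payoffX_swap best_reply_iff_moments[symmetric])

lemma nash_iff_moments:
  fixes a b c \<theta> :: real
  assumes "a \<noteq> 0" "0 < b" "\<theta> < c"
  defines "\<kappa> \<equiv> b / a" and "\<zeta> \<equiv> (b / a)^2 - (c - \<theta>) / a"
  shows "nash a b c \<theta> M N \<longleftrightarrow> strategy M \<and> strategy N \<and> mean M = mean N \<and> var M = var N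
    \<and> (var M = 0 \<and> 0 \<le> \<zeta> \<and> mean M = \<kappa> - sgn a * sqrt \<zeta> \<or> mean M = \<kappa> \<and> var M = - \<zeta>)"
proof -
  have "0 < c - \<theta>"
    using \<open>\<theta> < c\<close> by simp
  then show ?thesis
    using mutual_best_reply_moments_iff[OF \<open>a \<noteq> 0\<close> \<open>0 < b\<close>, of "c - \<theta>" "mean M" "var M" "mean N" "var N"]
      mean_nonneg[of M] var_nonneg[of M] mean_nonneg[of N] var_nonneg[of N]
    unfolding nash_iff_best_reply_moments \<kappa>_def \<zeta>_def by blast
qed

theorem theorem1:
  fixes a b c \<theta> :: real
  assumes "a \<noteq> 0" and "b > 0" and "c > 0" and "0 < \<theta>" and "\<theta> < c"
  defines "\<kappa> \<equiv> b / a"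
  defines "\<zeta> \<equiv> \<kappa>^2 - (c - \<theta>) / a"
  shows "(\<zeta> \<ge> 0 \<longrightarrow>
            (\<forall>M N. nash a b c \<theta> M N \<longleftrightarrow>
               (M = return borel (\<kappa> - sgn a * sqrt \<zeta>) \<and> N = return borel (\<kappa> - sgn a * sqrt \<zeta>))))
       \<and> (\<zeta> < 0 \<longrightarrow>
            (\<forall>x y. 0 \<le> x \<longrightarrow> 0 \<le> y \<longrightarrow> \<not> nash a b c \<theta> (return borel x) (return borel y))
          \<and> (\<forall>M N. nash a b c \<theta> M N \<longrightarrow>
               mean M = \<kappa> \<and> mean N = \<kappa> \<and> var M = - \<zeta> \<and> var N = - \<zeta>)
          \<and> (\<forall>M N. strategy M \<longrightarrow> strategy N \<longrightarrow>
               mean M = \<kappa> \<longrightarrow> mean N = \<kappa> \<longrightarrow> var M = - \<zeta> \<longrightarrow> var N = - \<zeta> \<longrightarrow>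
               nash a b c \<theta> M N))"
proof -
  note nash_iff = nash_iff_moments[OF \<open>a \<noteq> 0\<close> \<open>b > 0\<close> \<open>\<theta> < c\<close>, folded \<kappa>_def, folded \<zeta>_def]
  have "0 \<le> \<kappa> - sgn a * sqrt \<zeta>"
    using lower_root_nonneg[of a b "c - \<theta>"] assms by simp
  have "nash a b c \<theta> M N \<longleftrightarrow>
      M = return borel (\<kappa> - sgn a * sqrt \<zeta>) \<and> N = return borel (\<kappa> - sgn a * sqrt \<zeta>)"
    if "0 \<le> \<zeta>" for M N
  proof -
    have "nash a b c \<theta> M N \<longleftrightarrow>
        (strategy M \<and> var M = 0 \<and> mean M = \<kappa> - sgn a * sqrt \<zeta>)
        \<and> (strategy N \<and> var N = 0 \<and> mean N = \<kappa> - sgn a * sqrt \<zeta>)"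
      using nash_iff[of M N] var_nonneg[of M] that by auto
    then show ?thesis
      using \<open>0 \<le> \<kappa> - sgn a * sqrt \<zeta>\<close> by (simp add: strategy_var_eq_0_iff_return)
  qed
  moreover have "nash a b c \<theta> M N \<longleftrightarrow> strategy M \<and> strategy N
      \<and> mean M = \<kappa> \<and> mean N = \<kappa> \<and> var M = - \<zeta> \<and> var N = - \<zeta>"
    if "\<zeta> < 0" for M N
    using nash_iff[of M N] that by auto
  ultimately show ?thesis
    using var_return by auto
qed

end
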